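(* Let $\mathcal{G}$ be a MAG and let $H,H'$ be two heads whose maximal vertex is $i$. If $H\to^KH'$ and $H\to^LH'$, then $H\to^{K\cap L}H'$.
   Context: A MAG is an acyclic directed mixed graph (directed and bidirected edges, no directed cycles) with $\mathrm{sib}(v)\cap\mathrm{an}(v)=\emptyset$ for all $v$ and in which every nonadjacent pair is m-separated by some set. Vertices are numbered in a topological order (ancestors have smaller labels). $\mathrm{barren}_{\mathcal{G}'}(W)=\{w\in W:\mathrm{de}_{\mathcal{G}'}(w)\cap W=\{w\}\}$; a nonempty $H$ is a head if $\mathrm{barren}(H)=H$ and $H$ lies in one district (bidirected-connected component) of $\mathcal{G}_{\mathrm{an}(H)}$. For a head $H$ with maximal vertex $i$ and $\emptyset\ne K\subseteq H\setminus\{i\}$, write $H\to^KH'$ if $H'=\mathrm{barren}_{\mathcal{G}'}(\mathrm{dis}_{\mathcal{G}'}(i))$, where $\mathcal{G}'=\mathcal{G}_{\mathrm{an}(H)\setminus K}$ and $\mathrm{dis}_{\mathcal{G}'}(i)$ is the district of $i$ in $\mathcal{G}'$. *)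

theory Defs
  imports Main
begin

text \<open>A mixed graph on vertex set V (vertices are natural numbers), with directed
edges D (a pair (a,b) means a \<rightarrow> b) and bidirected edges B (a symmetric relation).\<close>

definition mixed_graph :: "nat set \<Rightarrow> (nat \<times> nat) set \<Rightarrow> (nat \<times> nat) set \<Rightarrow> bool" where
  "mixed_graph V D B \<longleftrightarrow> finite V \<and> D \<subseteq> V \<times> V \<and> B \<subseteq> V \<times> V \<and> sym B \<and> irrefl B"

definition anc :: "nat set \<Rightarrow> (nat \<times> nat) set \<Rightarrow> nat \<Rightarrow> nat set" where
  "anc V D v = {w \<in> V. (w, v) \<in> (D \<inter> V \<times> V)\<^sup>*}"

definition anc_set :: "nat set \<Rightarrow> (nat \<times> nat) set \<Rightarrow> nat set \<Rightarrow> nat set" where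
  "anc_set V D W = (\<Union>w\<in>W. anc V D w)"

definition desc :: "nat set \<Rightarrow> (nat \<times> nat) set \<Rightarrow> nat \<Rightarrow> nat set" where
  "desc V D v = {w \<in> V. (v, w) \<in> (D \<inter> V \<times> V)\<^sup>*}"

definition sib :: "nat set \<Rightarrow> (nat \<times> nat) set \<Rightarrow> nat \<Rightarrow> nat set" where
  "sib V B v = {w \<in> V. (v, w) \<in> B}"

definition adjacent :: "(nat \<times> nat) set \<Rightarrow> (nat \<times> nat) set \<Rightarrow> nat \<Rightarrow> nat \<Rightarrow> bool" where
  "adjacent D B a b \<longleftrightarrow> (a, b) \<in> D \<or> (b, a) \<in> D \<or> (a, b) \<in> B"

datatype edge_kind = Fwd | Bwd | Bid

definition step_ok :: "(nat \<times> nat) set \<Rightarrow> (nat \<times> nat) set \<Rightarrow> nat \<Rightarrow> edge_kind \<Rightarrow> nat \<Rightarrow> bool" where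
  "step_ok D B x e y \<longleftrightarrow>
     (case e of Fwd \<Rightarrow> (x, y) \<in> D | Bwd \<Rightarrow> (y, x) \<in> D | Bid \<Rightarrow> (x, y) \<in> B)"

definition is_path :: "nat set \<Rightarrow> (nat \<times> nat) set \<Rightarrow> (nat \<times> nat) set \<Rightarrow> nat list \<Rightarrow> edge_kind list \<Rightarrow> nat \<Rightarrow> nat \<Rightarrow> bool" where
  "is_path V D B vs es a b \<longleftrightarrow>
     length vs = Suc (length es) \<and> distinct vs \<and> set vs \<subseteq> V \<and>
     hd vs = a \<and> last vs = b \<and>
     (\<forall>k < length es. step_ok D B (vs ! k) (es ! k) (vs ! Suc k))"

text \<open>Inner vertex vs!k (0 < k < length es) is a collider iff both adjacent edges
have an arrowhead at it.\<close>
definition collider :: "edge_kind list \<Rightarrow> nat \<Rightarrow> bool" where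
  "collider es k \<longleftrightarrow> es ! (k - 1) \<in> {Fwd, Bid} \<and> es ! k \<in> {Bwd, Bid}"

definition m_connecting :: "nat set \<Rightarrow> (nat \<times> nat) set \<Rightarrow> (nat \<times> nat) set \<Rightarrow> nat set \<Rightarrow> nat list \<Rightarrow> edge_kind list \<Rightarrow> bool" where
  "m_connecting V D B Z vs es \<longleftrightarrow>
     (\<forall>k. 0 < k \<and> k < length es \<longrightarrow>
        (collider es k \<longrightarrow> vs ! k \<in> anc_set V D Z) \<and>
        (\<not> collider es k \<longrightarrow> vs ! k \<notin> Z))"

definition m_separated :: "nat set \<Rightarrow> (nat \<times> nat) set \<Rightarrow> (nat \<times> nat) set \<Rightarrow> nat \<Rightarrow> nat \<Rightarrow> nat set \<Rightarrow> bool" where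
  "m_separated V D B a b Z \<longleftrightarrow> a \<notin> Z \<and> b \<notin> Z \<and> Z \<subseteq> V \<and>
     \<not> (\<exists>vs es. is_path V D B vs es a b \<and> m_connecting V D B Z vs es)"

definition MAG :: "nat set \<Rightarrow> (nat \<times> nat) set \<Rightarrow> (nat \<times> nat) set \<Rightarrow> bool" where
  "MAG V D B \<longleftrightarrow> mixed_graph V D B \<and>
     (\<forall>v\<in>V. (v, v) \<notin> D\<^sup>+) \<and>
     (\<forall>v\<in>V. sib V B v \<inter> anc V D v = {}) \<and>
     (\<forall>a\<in>V. \<forall>b\<in>V. a \<noteq> b \<and> \<not> adjacent D B a b \<longrightarrow> (\<exists>Z. m_separated V D B a b Z))"

definition topological :: "(nat \<times> nat) set \<Rightarrow> bool" where
  "topological D \<longleftrightarrow> (\<forall>(a, b) \<in> D. a < b)"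

definition restr :: "(nat \<times> nat) set \<Rightarrow> nat set \<Rightarrow> (nat \<times> nat) set" where
  "restr E A = E \<inter> A \<times> A"

definition barren :: "nat set \<Rightarrow> (nat \<times> nat) set \<Rightarrow> nat set \<Rightarrow> nat set" where
  "barren V D W = {w \<in> W. desc V D w \<inter> W = {w}}"

definition dis :: "nat set \<Rightarrow> (nat \<times> nat) set \<Rightarrow> nat \<Rightarrow> nat set" where
  "dis V B v = {w \<in> V. (v, w) \<in> (B \<inter> V \<times> V)\<^sup>*}"

definition head :: "nat set \<Rightarrow> (nat \<times> nat) set \<Rightarrow> (nat \<times> nat) set \<Rightarrow> nat set \<Rightarrow> bool" where
  "head V D B H \<longleftrightarrow> H \<noteq> {} \<and> H \<subseteq> V \<and> barren V D H = H \<and>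
     (let A = anc_set V D H in \<exists>v\<in>A. H \<subseteq> dis A (restr B A) v)"

definition head_step :: "nat set \<Rightarrow> (nat \<times> nat) set \<Rightarrow> (nat \<times> nat) set \<Rightarrow> nat set \<Rightarrow> nat set \<Rightarrow> nat set \<Rightarrow> bool" where
  "head_step V D B H K H' \<longleftrightarrow> head V D B H \<and> K \<noteq> {} \<and> K \<subseteq> H - {Max H} \<and>
     (let A = anc_set V D H - K in
      H' = barren A (restr D A) (dis A (restr B A) (Max H)))"

end

theory Submission
  imports Defs
begin

(* Write A = an(H), i = max H and D_X = dis_{A-X}(i).  The vertices of H are sinks of G_A, so
   every vertex of H in D_K is barren there; hence L cannot meet D_K (it would lie in
   H' = barren(D_L), which avoids L), and symmetrically.  So D_K = D_L is also the district of i
   in G_{A-(K u L)}, and since A-(K n L) = (A-K) u (A-L), it is the district of i in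
   G_{A-(K n L)} as well.  Removing sinks does not change barren subsets, so
   barren(D_K) is the same computed in A-K or in A-(K n L).  Finally K n L is nonempty:
   otherwise D_K would be the district of i in G_A, which contains H and hence K. *)

lemma dis_restr_eq: "dis X (restr B X) = dis X B"
  unfolding dis_def restr_def by (simp add: Int_assoc)

lemma barren_restr_eq: "barren X (restr D X) = barren X D"
  unfolding barren_def desc_def restr_def by (simp add: Int_assoc)

lemma head_step_iff:
  "head_step V D B H K H' \<longleftrightarrow> head V D B H \<and> K \<noteq> {} \<and> K \<subseteq> H - {Max H} \<and>
     H' = barren (anc_set V D H - K) D (dis (anc_set V D H - K) B (Max H))"
  unfolding head_step_def Let_def dis_restr_eq barren_restr_eq ..

lemma dis_subset: "dis X B v \<subseteq> X"
  unfolding dis_def by auto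

lemma dis_mono: "X \<subseteq> Y \<Longrightarrow> dis X B v \<subseteq> dis Y B v"
  unfolding dis_def using rtrancl_mono[of "B \<inter> X \<times> X" "B \<inter> Y \<times> Y"] by blast

lemma dis_closed: "w \<in> dis X B v \<Longrightarrow> z \<in> X \<Longrightarrow> (w, z) \<in> B \<Longrightarrow> z \<in> dis X B v"
  unfolding dis_def by (auto intro: rtrancl_into_rtrancl)

lemma dis_sym:
  assumes "sym B" and "w \<in> dis X B v"
  shows "dis X B w = dis X B v"
proof -
  have "sym ((B \<inter> X \<times> X)\<^sup>*)"
    using assms(1) by (intro sym_rtrancl) (auto simp: sym_def)
  moreover have "(v, w) \<in> (B \<inter> X \<times> X)\<^sup>*"
    using assms(2) unfolding dis_def by auto
  ultimately have "(w, v) \<in> (B \<inter> X \<times> X)\<^sup>*"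
    unfolding sym_def by blast
  with \<open>(v, w) \<in> _\<close> show ?thesis
    unfolding dis_def by (auto intro: rtrancl_trans)
qed

lemma dis_eq_if_subset:
  assumes "dis Y B v \<subseteq> X" and "X \<subseteq> Y" and "v \<in> X"
  shows "dis X B v = dis Y B v"
proof
  show "dis X B v \<subseteq> dis Y B v"
    using assms(2) by (rule dis_mono)
  have "w \<in> dis X B v" if "(v, w) \<in> (B \<inter> Y \<times> Y)\<^sup>*" for w
    using that
  proof (induction rule: rtrancl_induct)
    case base
    then show ?case using assms(3) unfolding dis_def by simp
  next
    case (step y z)
    then have "z \<in> dis Y B v"
      unfolding dis_def by (auto intro: rtrancl_into_rtrancl)
    with step show ?case
      using assms(1) by (blast intro: dis_closed)
  qed
  then show "dis Y B v \<subseteq> dis X B v"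
    unfolding dis_def by blast
qed

lemma dis_Un_eq:
  assumes "dis X B v = S" and "dis Y B v = S"
  shows "dis (X \<union> Y) B v = S"
proof
  show "S \<subseteq> dis (X \<union> Y) B v"
    using assms(1) by (metis dis_mono sup_ge1)
  have "w \<in> S" if "(v, w) \<in> (B \<inter> (X \<union> Y) \<times> (X \<union> Y))\<^sup>*" and "w \<in> X \<union> Y" for w
    using that
  proof (induction rule: rtrancl_induct)
    case base
    then show ?case using assms unfolding dis_def by blast
  next
    case (step y z)
    then have "y \<in> S" by blast
    with step.prems assms show ?case
      using step.hyps(2) by (blast intro: dis_closed)
  qed
  then show "dis (X \<union> Y) B v \<subseteq> S"
    unfolding dis_def by blast
qed

lemma sink_in_barren:
  assumes "l \<in> S" and "S \<subseteq> X" and "\<forall>y\<in>X. (l, y) \<notin> D"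
  shows "l \<in> barren X D S"
proof -
  have "w = l" if "(l, w) \<in> (D \<inter> X \<times> X)\<^sup>*" for w
    using that assms(3) by (cases rule: converse_rtranclE) auto
  then have "desc X D l = {l}"
    using assms(1,2) unfolding desc_def by blast
  with assms(1) show ?thesis
    unfolding barren_def by blast
qed

lemma barren_Diff_sinks:
  assumes sinks: "\<forall>k\<in>K. \<forall>y\<in>X. (k, y) \<notin> D" and "S \<subseteq> X - K"
  shows "barren (X - K) D S = barren X D S"
proof -
  have reach: "y \<in> K \<or> (w, y) \<in> (D \<inter> (X - K) \<times> (X - K))\<^sup>*"
    if "(w, y) \<in> (D \<inter> X \<times> X)\<^sup>*" for w y
    using that
  proof (induction rule: rtrancl_induct)
    case (step y z)
    then have "y \<notin> K" using sinks by blast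
    with step show ?case by (auto intro: rtrancl_into_rtrancl)
  qed simp
  have "desc (X - K) D w \<inter> S = desc X D w \<inter> S" for w
  proof
    show "desc (X - K) D w \<inter> S \<subseteq> desc X D w \<inter> S"
      unfolding desc_def using rtrancl_mono[of "D \<inter> (X - K) \<times> (X - K)" "D \<inter> X \<times> X"] by blast
    show "desc X D w \<inter> S \<subseteq> desc (X - K) D w \<inter> S"
      unfolding desc_def using reach assms(2) by blast
  qed
  then show ?thesis
    unfolding barren_def by simp
qed

lemma no_edge_from_barren_to_anc_set:
  assumes acyclic: "\<forall>v\<in>V. (v, v) \<notin> D\<^sup>+" and "barren V D H = H"
    and "h \<in> H" and "y \<in> anc_set V D H"
  shows "(h, y) \<notin> D"
proof
  assume hy: "(h, y) \<in> D"
  obtain h' where "h' \<in> H" and y: "y \<in> V" "(y, h') \<in> (D \<inter> V \<times> V)\<^sup>*"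
    using assms(4) unfolding anc_set_def anc_def by blast
  have desc_h: "desc V D h \<inter> H = {h}"
    using assms(2,3) unfolding barren_def by blast
  then have "h \<in> V"
    unfolding desc_def by blast
  with hy y have path: "(h, h') \<in> (D \<inter> V \<times> V)\<^sup>+"
    by (blast intro: rtrancl_into_trancl2)
  moreover have "h' \<in> V"
    using \<open>h' \<in> H\<close> assms(2) unfolding barren_def desc_def by blast
  ultimately have "h' \<in> desc V D h"
    unfolding desc_def by (simp add: trancl_into_rtrancl)
  with desc_h \<open>h' \<in> H\<close> have "h' = h" by blast
  with path have "(h, h) \<in> D\<^sup>+"
    using trancl_mono by blast
  with acyclic \<open>h \<in> V\<close> show False by blast
qed

lemma subset_anc_set: "W \<subseteq> V \<Longrightarrow> W \<subseteq> anc_set V D W"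
  unfolding anc_set_def anc_def by blast

lemma Max_head_in:
  assumes "MAG V D B" and "head V D B H"
  shows "Max H \<in> H"
proof -
  have "finite H"
    using assms finite_subset unfolding MAG_def mixed_graph_def head_def by blast
  then show ?thesis
    using assms(2) unfolding head_def by (blast intro: Max_in)
qed

lemma head_subset_dis_Max:
  assumes "MAG V D B" and "head V D B H"
  shows "H \<subseteq> dis (anc_set V D H) B (Max H)"
proof -
  obtain v where v: "H \<subseteq> dis (anc_set V D H) B v"
    using assms(2) unfolding head_def Let_def dis_restr_eq by blast
  have "sym B"
    using assms(1) unfolding MAG_def mixed_graph_def by blast
  with v Max_head_in[OF assms] show ?thesis
    using dis_sym by blast
qed

lemma head_sinks:
  assumes "MAG V D B" and "head V D B H"
  shows "\<forall>h\<in>H. \<forall>y\<in>anc_set V D H. (h, y) \<notin> D"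
  using assms no_edge_from_barren_to_anc_set unfolding MAG_def head_def by blast

lemma head_step_disjoint_dis:
  assumes "MAG V D B" and "head_step V D B H K H'" and "head_step V D B H L H'"
  shows "L \<inter> dis (anc_set V D H - K) B (Max H) = {}"
proof -
  let ?A = "anc_set V D H" and ?i = "Max H"
  have "l \<in> H'" if "l \<in> L" and "l \<in> dis (?A - K) B ?i" for l
  proof -
    have "l \<in> H"
      using \<open>l \<in> L\<close> assms(3) unfolding head_step_iff by blast
    with assms(1,2) have "\<forall>y\<in>?A - K. (l, y) \<notin> D"
      using head_sinks unfolding head_step_iff by blast
    then have "l \<in> barren (?A - K) D (dis (?A - K) B ?i)"
      by (rule sink_in_barren[OF that(2) dis_subset])
    with assms(2) show ?thesis
      unfolding head_step_iff by blast
  qed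
  moreover have "H' \<subseteq> ?A - L"
    using assms(3) dis_subset unfolding head_step_iff barren_def by blast
  ultimately show ?thesis by blast
qed

lemma head_step_dis_eq:
  assumes "MAG V D B" and "head_step V D B H K H'" and "head_step V D B H L H'"
  shows "dis (anc_set V D H - K) B (Max H) = dis (anc_set V D H - L) B (Max H)"
proof -
  let ?A = "anc_set V D H" and ?i = "Max H"
  have head: "head V D B H"
    using assms(2) unfolding head_step_iff by blast
  have "?i \<in> ?A - (K \<union> L)"
    using Max_head_in[OF assms(1) head] subset_anc_set assms(2,3)
    unfolding head_step_iff head_def by blast
  then have "dis (?A - (K \<union> L)) B ?i = dis (?A - K) B ?i"
    and "dis (?A - (K \<union> L)) B ?i = dis (?A - L) B ?i"
    using head_step_disjoint_dis[OF assms] head_step_disjoint_dis[OF assms(1,3,2)]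
      dis_subset[of "?A - K" B ?i] dis_subset[of "?A - L" B ?i]
    by (intro dis_eq_if_subset; blast)+
  then show ?thesis by simp
qed

theorem lemmaC1:
  fixes V :: "nat set" and D B :: "(nat \<times> nat) set" and H H' K L :: "nat set" and i :: nat
  assumes "MAG V D B" and "topological D"
    and "head V D B H" and "head V D B H'"
    and "Max H = i" and "Max H' = i"
    and "head_step V D B H K H'" and "head_step V D B H L H'"
  shows "head_step V D B H (K \<inter> L) H'"
proof -
  define A where "A = anc_set V D H"
  define DK where "DK = dis (A - K) B i"
  have step_K: "K \<noteq> {}" "K \<subseteq> H - {i}" "H' = barren (A - K) D DK"
    using assms(5,7) unfolding head_step_iff A_def DK_def by auto
  have "dis (A - L) B i = DK"
    using head_step_dis_eq[OF assms(1,7,8)] assms(5) unfolding A_def DK_def by simp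
  then have dis_KL: "dis (A - K \<inter> L) B i = DK"
    unfolding Diff_Int by (intro dis_Un_eq) (simp_all add: DK_def)
  have "K \<inter> L \<noteq> {}"
  proof
    assume "K \<inter> L = {}"
    then have "H \<subseteq> DK"
      using dis_KL head_subset_dis_Max[OF assms(1,3)] assms(5) unfolding A_def by simp
    with step_K(1,2) show False
      using dis_subset unfolding DK_def by blast
  qed
  moreover have "H' = barren (A - K \<inter> L) D DK"
  proof -
    have sinks: "\<forall>k\<in>K. \<forall>y\<in>A. (k, y) \<notin> D"
      using head_sinks[OF assms(1,3)] step_K(2) unfolding A_def by blast
    have "DK \<subseteq> A - K"
      unfolding DK_def by (rule dis_subset)
    then have "barren (A - K \<inter> L) D DK = barren A D DK"
      using sinks by (intro barren_Diff_sinks) blast+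
    also have "\<dots> = barren (A - K) D DK"
      using sinks \<open>DK \<subseteq> A - K\<close> by (intro barren_Diff_sinks[symmetric])
    finally show ?thesis
      using step_K(3) by simp
  qed
  ultimately show ?thesis
    unfolding head_step_iff assms(5) A_def[symmetric] dis_KL using assms(3) step_K(2) by blast
qed

end
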